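(* Let $\mathsf V$ be a quantale, $X=(X,a)$ a $\mathsf V$-category, $s=(x_n)_{n\in\mathbb N}$ a Cauchy sequence in $X$ and $x\in X$ such that $\varphi_s=x_*$ and $\psi_s=x^*$, i.e. $\varphi_s(y)=a(x,y)$ and $\psi_s(y)=a(y,x)$ for all $y\in X$. Then $s$ converges to $x$.
   Context: A quantale $(\mathsf V,\otimes,k)$ is a complete anti-symmetric lattice with an associative, commutative operation $\otimes$ with neutral element $k$ distributing over arbitrary suprema. A $\mathsf V$-category $(X,a)$ is a set with $a:X\times X\to\mathsf V$ such that $k\le a(x,x)$ and $a(x,y)\otimes a(y,z)\le a(x,z)$. For a sequence $s=(x_n)$: $\mathrm{Cauchy}(s)=\bigvee_N\bigwedge_{n,m\ge N}a(x_n,x_m)$, $s$ is Cauchy if $k\le\mathrm{Cauchy}(s)$; $\varphi_s(y)=\bigvee_N\bigwedge_{n\ge N}a(x_n,y)$ and $\psi_s(y)=\bigvee_N\bigwedge_{n\ge N}a(y,x_n)$. For $M\subseteq X$, $\overline M=\{x\in X\mid k\le\bigvee_{y\in M}a(x,y)\otimes a(y,x)\}$. A sequence $s$ converges to $x$ if $x\in\overline{\{x_n\mid n\in M\}}$ for every infinite $M\subseteq\mathbb N$. *)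

theory Defs
  imports Main
begin

definition quantale :: "('v::complete_lattice \<Rightarrow> 'v \<Rightarrow> 'v) \<Rightarrow> 'v \<Rightarrow> bool" where
  "quantale tensor k \<longleftrightarrow>
     (\<forall>u v w. tensor (tensor u v) w = tensor u (tensor v w)) \<and>
     (\<forall>u v. tensor u v = tensor v u) \<and>
     (\<forall>u. tensor k u = u \<and> tensor u k = u) \<and>
     (\<forall>u B. tensor u (Sup B) = (SUP b\<in>B. tensor u b)) \<and>
     (\<forall>u B. tensor (Sup B) u = (SUP b\<in>B. tensor b u))"

definition V_category :: "('v::complete_lattice \<Rightarrow> 'v \<Rightarrow> 'v) \<Rightarrow> 'v \<Rightarrow> 'x set \<Rightarrow> ('x \<Rightarrow> 'x \<Rightarrow> 'v) \<Rightarrow> bool" where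
  "V_category tensor k X a \<longleftrightarrow>
     (\<forall>x\<in>X. k \<le> a x x) \<and>
     (\<forall>x\<in>X. \<forall>y\<in>X. \<forall>z\<in>X. tensor (a x y) (a y z) \<le> a x z)"

definition cauchy_val :: "('x \<Rightarrow> 'x \<Rightarrow> 'v::complete_lattice) \<Rightarrow> (nat \<Rightarrow> 'x) \<Rightarrow> 'v" where
  "cauchy_val a s = (SUP N. INF n\<in>{N..}. INF m\<in>{N..}. a (s n) (s m))"

definition is_cauchy :: "'v::complete_lattice \<Rightarrow> ('x \<Rightarrow> 'x \<Rightarrow> 'v) \<Rightarrow> (nat \<Rightarrow> 'x) \<Rightarrow> bool" where
  "is_cauchy k a s \<longleftrightarrow> k \<le> cauchy_val a s"

definition phi_seq :: "('x \<Rightarrow> 'x \<Rightarrow> 'v::complete_lattice) \<Rightarrow> (nat \<Rightarrow> 'x) \<Rightarrow> 'x \<Rightarrow> 'v" where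
  "phi_seq a s y = (SUP N. INF n\<in>{N..}. a (s n) y)"

definition psi_seq :: "('x \<Rightarrow> 'x \<Rightarrow> 'v::complete_lattice) \<Rightarrow> (nat \<Rightarrow> 'x) \<Rightarrow> 'x \<Rightarrow> 'v" where
  "psi_seq a s y = (SUP N. INF n\<in>{N..}. a y (s n))"

definition V_closure :: "('v::complete_lattice \<Rightarrow> 'v \<Rightarrow> 'v) \<Rightarrow> 'v \<Rightarrow> 'x set \<Rightarrow> ('x \<Rightarrow> 'x \<Rightarrow> 'v) \<Rightarrow> 'x set \<Rightarrow> 'x set" where
  "V_closure tensor k X a M = {x\<in>X. k \<le> (SUP y\<in>M. tensor (a x y) (a y x))}"

definition seq_converges :: "('v::complete_lattice \<Rightarrow> 'v \<Rightarrow> 'v) \<Rightarrow> 'v \<Rightarrow> 'x set \<Rightarrow> ('x \<Rightarrow> 'x \<Rightarrow> 'v) \<Rightarrow> (nat \<Rightarrow> 'x) \<Rightarrow> 'x \<Rightarrow> bool" where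
  "seq_converges tensor k X a s x \<longleftrightarrow>
     (\<forall>M::nat set. infinite M \<longrightarrow> x \<in> V_closure tensor k X a (s ` M))"

end

theory Submission
  imports Defs
begin

text \<open>Evaluating \<open>\<phi>\<^sub>s = x\<^sub>*\<close> and \<open>\<psi>\<^sub>s = x\<^sup>*\<close> at \<open>x\<close> gives \<open>k \<le> \<phi>\<^sub>s(x)\<close> and
\<open>k \<le> \<psi>\<^sub>s(x)\<close>, i.e. \<open>k\<close> lies below the "lim inf" of \<open>a(x\<^sub>n,x)\<close> and of \<open>a(x,x\<^sub>n)\<close>.
Since tensor distributes over suprema, the tensor of two such lim infs is
dominated by \<open>a(x,x\<^sub>m) \<otimes> a(x\<^sub>m,x)\<close> for arbitrarily large \<open>m\<close>, in particular
for \<open>m\<close> in any infinite index set \<open>M\<close>; hence \<open>k = k \<otimes> k\<close> lies below the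
supremum defining the closure of \<open>{x\<^sub>n | n \<in> M}\<close>.\<close>

lemma quantale_tensor_mono:
  fixes u u' v v' :: "'v::complete_lattice"
  assumes q: "quantale tensor k" and "u \<le> u'" and "v \<le> v'"
  shows "tensor u v \<le> tensor u' v'"
proof -
  have distl: "\<And>w B. tensor w (Sup B) = (SUP b\<in>B. tensor w b)"
    and comm: "\<And>u v. tensor u v = tensor v u"
    using q unfolding quantale_def by blast+
  have mono_right: "tensor w y \<le> tensor w y'" if "y \<le> y'" for w y y' :: 'v
  proof -
    have "tensor w y' = tensor w (Sup {y, y'})" using that by (simp add: sup_absorb2)
    also have "\<dots> = sup (tensor w y) (tensor w y')" by (simp only: distl[of w "{y, y'}"]) simp
    finally show ?thesis by (simp add: le_iff_sup)
  qed
  have "tensor u v \<le> tensor u v'" using assms(3) by (rule mono_right)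
  also have "\<dots> = tensor v' u" by (rule comm)
  also have "\<dots> \<le> tensor v' u'" using assms(2) by (rule mono_right)
  also have "\<dots> = tensor u' v'" by (rule comm)
  finally show ?thesis .
qed

lemma quantale_unit_le_tensor:
  assumes q: "quantale tensor k" and "k \<le> u" and "k \<le> v"
  shows "k \<le> tensor u v"
proof -
  have "k = tensor k k" using q unfolding quantale_def by simp
  also have "\<dots> \<le> tensor u v" using assms by (rule quantale_tensor_mono)
  finally show ?thesis .
qed

lemma quantale_tensor_SUP_le:
  fixes S :: "'v::complete_lattice"
  assumes q: "quantale tensor k" and le: "\<And>i j. tensor (f i) (g j) \<le> S"
  shows "tensor (SUP i. f i) (SUP j. g j) \<le> S"
proof -
  have distl: "\<And>u B. tensor u (Sup B) = (SUP b\<in>B. tensor u b)"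
    and distr: "\<And>u B. tensor (Sup B) u = (SUP b\<in>B. tensor b u)"
    using q unfolding quantale_def by blast+
  have "tensor (SUP i. f i) (SUP j. g j) = (SUP i. tensor (f i) (SUP j. g j))"
    by (simp only: distr image_image)
  also have "\<dots> = (SUP i. SUP j. tensor (f i) (g j))"
    by (simp only: distl image_image)
  also have "\<dots> \<le> S" using le by (intro SUP_least)
  finally show ?thesis .
qed

lemma quantale_tensor_liminf_le_SUP:
  fixes f g :: "nat \<Rightarrow> 'v::complete_lattice"
  assumes q: "quantale tensor k" and M: "infinite M"
  shows "tensor (SUP N. INF n\<in>{N..}. f n) (SUP N. INF n\<in>{N..}. g n)
           \<le> (SUP m\<in>M. tensor (f m) (g m))"
proof (rule quantale_tensor_SUP_le[OF q])
  fix N N' :: nat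
  have "\<not> M \<subseteq> {..<max N N'}" using M finite_subset by blast
  then obtain m where m: "m \<in> M" "max N N' \<le> m" by (meson lessThan_iff not_le subsetI)
  have "tensor (INF n\<in>{N..}. f n) (INF n\<in>{N'..}. g n) \<le> tensor (f m) (g m)"
    using m by (intro quantale_tensor_mono[OF q] INF_lower) auto
  also have "\<dots> \<le> (SUP m\<in>M. tensor (f m) (g m))" using m by (intro SUP_upper)
  finally show "tensor (INF n\<in>{N..}. f n) (INF n\<in>{N'..}. g n) \<le> (SUP m\<in>M. tensor (f m) (g m))" .
qed

theorem proposition3p16:
  fixes tensor :: "'v::complete_lattice \<Rightarrow> 'v \<Rightarrow> 'v" and k :: 'v
    and X :: "'x set" and a :: "'x \<Rightarrow> 'x \<Rightarrow> 'v" and s :: "nat \<Rightarrow> 'x" and x :: 'x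
  assumes "quantale tensor k"
    and "V_category tensor k X a"
    and "\<forall>n. s n \<in> X"
    and "x \<in> X"
    and "is_cauchy k a s"
    and "\<forall>y\<in>X. phi_seq a s y = a x y"
    and "\<forall>y\<in>X. psi_seq a s y = a y x"
  shows "seq_converges tensor k X a s x"
  unfolding seq_converges_def
proof (intro allI impI)
  fix M :: "nat set" assume M: "infinite M"
  have "k \<le> a x x" using assms(2,4) unfolding V_category_def by blast
  then have psi: "k \<le> (SUP N. INF n\<in>{N..}. a x (s n))"
    and phi: "k \<le> (SUP N. INF n\<in>{N..}. a (s n) x)"
    using assms(4,6,7) unfolding phi_seq_def psi_seq_def by auto
  have "k \<le> tensor (SUP N. INF n\<in>{N..}. a x (s n)) (SUP N. INF n\<in>{N..}. a (s n) x)"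
    using assms(1) psi phi by (rule quantale_unit_le_tensor)
  also have "\<dots> \<le> (SUP m\<in>M. tensor (a x (s m)) (a (s m) x))"
    using assms(1) M by (rule quantale_tensor_liminf_le_SUP)
  also have "\<dots> = (SUP y\<in>s ` M. tensor (a x y) (a y x))" by (simp add: image_image)
  finally show "x \<in> V_closure tensor k X a (s ` M)"
    unfolding V_closure_def using assms(4) by blast
qed

end
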